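(* Let $T$ be a $G$-spaced star with center $r$ and leaves $[m]$. Let $I\subsetneq[m]$ and let $T'$ be the $G$-spaced star with center $r$ (with the same $V_r,B_r$) and leaves $[m]\setminus I$, with the same spaces attached to the leaves it shares with $T$. Let $\theta$ be a $G$-invariant tensor in $\bigotimes_{v\in I}V_v^*$. Then the map $L(T)\to L(T')$ defined by $\bigotimes_{v\in[m]}x_v\mapsto\theta\bigl(\bigotimes_{v\in I}x_v\bigr)\cdot\bigotimes_{v\in[m]\setminus I}x_v$ maps $\mathcal{X}(T)$ into $\mathcal{X}(T')$.
   Context: $G$ is a finite Abelian group, $K$ an infinite field over which every finite-dimensional $G$-representation splits into one-dimensional irreducibles. A $G$-spaced star with center $r$ and leaves $[m]=\{0,\ldots,m-1\}$ consists of a star-shaped tree with these vertices, and for each vertex $v$ a finite-dimensional $G$-representation $V_v$ with a distinguished basis $B_v$ permuted by $G$ and the symmetric bilinear form $(\cdot|\cdot)_v$ making $B_v$ orthonormal. $L(T)=\bigotimes_{v\in[m]}V_v$. A $G$-representation of $T$ is a tuple $A=(A_{rv})_{v\in[m]}$ of $G$-invariant elements $A_{rv}\in V_r\otimes V_v$; writing $A_{rv}=\sum_{b\in B_r}b\otimes a_{b,v}$, set $\Psi_T(A)=\sum_{b\in B_r}\bigotimes_{v\in[m]}a_{b,v}\in L(T)$ (this is the contraction of $\bigotimes_vA_{rv}$ at the center along $\sum_{b\in B_r}(b|\cdot)_r^{\otimes m}$). The equivariant model $\mathcal{X}(T)$ is the Zariski closure of the set of all $\Psi_T(A)$. *)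

theory Defs
  imports "HOL-Algebra.Group_Action" "HOL-Library.FuncSet"
begin

text \<open>n x n matrices over a field are functions nat => nat => 'k (entries with indices < n matter).\<close>

definition mmul :: "nat \<Rightarrow> (nat \<Rightarrow> nat \<Rightarrow> 'k::comm_ring_1) \<Rightarrow> (nat \<Rightarrow> nat \<Rightarrow> 'k) \<Rightarrow> nat \<Rightarrow> nat \<Rightarrow> 'k" where
  "mmul n P Q = (\<lambda>i j. \<Sum>k<n. P i k * Q k j)"

definition mat_eq :: "nat \<Rightarrow> (nat \<Rightarrow> nat \<Rightarrow> 'k) \<Rightarrow> (nat \<Rightarrow> nat \<Rightarrow> 'k) \<Rightarrow> bool" where
  "mat_eq n P Q \<longleftrightarrow> (\<forall>i<n. \<forall>j<n. P i j = Q i j)"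

definition mid :: "nat \<Rightarrow> nat \<Rightarrow> 'k::comm_ring_1" where
  "mid i j = (if i = j then 1 else 0)"

text \<open>A representation of the group G on K^n (every finite-dimensional representation is
  isomorphic to one of these).\<close>
definition is_matrep :: "('g, 'x) monoid_scheme \<Rightarrow> nat \<Rightarrow> ('g \<Rightarrow> nat \<Rightarrow> nat \<Rightarrow> 'k::comm_ring_1) \<Rightarrow> bool" where
  "is_matrep G n \<rho> \<longleftrightarrow> mat_eq n (\<rho> \<one>\<^bsub>G\<^esub>) mid \<and>
     (\<forall>g\<in>carrier G. \<forall>h\<in>carrier G. mat_eq n (\<rho> (g \<otimes>\<^bsub>G\<^esub> h)) (mmul n (\<rho> g) (\<rho> h)))"

text \<open>Every finite-dimensional G-representation over K splits into one-dimensional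
  irreducibles, i.e. is simultaneously diagonalizable in a suitable basis.\<close>
definition reps_split :: "('g, 'x) monoid_scheme \<Rightarrow> 'k::field itself \<Rightarrow> bool" where
  "reps_split G _ \<longleftrightarrow> (\<forall>n (\<rho> :: 'g \<Rightarrow> nat \<Rightarrow> nat \<Rightarrow> 'k). is_matrep G n \<rho> \<longrightarrow>
     (\<exists>P Q. mat_eq n (mmul n P Q) mid \<and> mat_eq n (mmul n Q P) mid \<and>
        (\<forall>g\<in>carrier G. \<forall>i<n. \<forall>j<n. i \<noteq> j \<longrightarrow> mmul n (mmul n Q (\<rho> g)) P i j = 0)))"

inductive_set polyfun :: "'i set \<Rightarrow> (('i \<Rightarrow> 'k::comm_ring_1) \<Rightarrow> 'k) set" for C where
  pf_const: "(\<lambda>x. c) \<in> polyfun C"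
| pf_coord: "i \<in> C \<Longrightarrow> (\<lambda>x. x i) \<in> polyfun C"
| pf_add: "p \<in> polyfun C \<Longrightarrow> q \<in> polyfun C \<Longrightarrow> (\<lambda>x. p x + q x) \<in> polyfun C"
| pf_mult: "p \<in> polyfun C \<Longrightarrow> q \<in> polyfun C \<Longrightarrow> (\<lambda>x. p x * q x) \<in> polyfun C"

definition vecs :: "'i set \<Rightarrow> ('i \<Rightarrow> 'k::zero) set" where
  "vecs C = {x. \<forall>i. i \<notin> C \<longrightarrow> x i = 0}"

definition zariski_closure :: "'i set \<Rightarrow> ('i \<Rightarrow> 'k::comm_ring_1) set \<Rightarrow> ('i \<Rightarrow> 'k) set" where
  "zariski_closure C S = {x \<in> vecs C. \<forall>p \<in> polyfun C. (\<forall>s\<in>S. p s = 0) \<longrightarrow> p x = 0}"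

text \<open>Leaves are a finite set J of natural numbers; leaf v carries V_v = K^(B v) with G acting
  by permuting the basis B v via act v; the center carries V_r = K^Br with action actr.
  L(T) = tensor product of the V_v, v in J, is K^(PiE J B) (coordinates w.r.t. the
  product basis). An element of V_r (x) V_v is a function Br x B v -> K.\<close>

definition star_param :: "('g, 'x) monoid_scheme \<Rightarrow> 'c set \<Rightarrow> ('g \<Rightarrow> 'c \<Rightarrow> 'c)
   \<Rightarrow> nat set \<Rightarrow> (nat \<Rightarrow> 'b set) \<Rightarrow> (nat \<Rightarrow> 'g \<Rightarrow> 'b \<Rightarrow> 'b)
   \<Rightarrow> (nat \<Rightarrow> 'c \<Rightarrow> 'b \<Rightarrow> 'k) \<Rightarrow> bool" where
  "star_param G Br actr J B act A \<longleftrightarrow>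
     (\<forall>v\<in>J. \<forall>g\<in>carrier G. \<forall>b\<in>Br. \<forall>c\<in>B v. A v (actr g b) (act v g c) = A v b c)"

definition Psi :: "'c set \<Rightarrow> nat set \<Rightarrow> (nat \<Rightarrow> 'b set) \<Rightarrow> (nat \<Rightarrow> 'c \<Rightarrow> 'b \<Rightarrow> 'k::comm_ring_1)
   \<Rightarrow> (nat \<Rightarrow> 'b) \<Rightarrow> 'k" where
  "Psi Br J B A = (\<lambda>c. if c \<in> PiE J B then (\<Sum>b\<in>Br. \<Prod>v\<in>J. A v b (c v)) else 0)"

definition equiv_model :: "('g, 'x) monoid_scheme \<Rightarrow> 'c set \<Rightarrow> ('g \<Rightarrow> 'c \<Rightarrow> 'c)
   \<Rightarrow> nat set \<Rightarrow> (nat \<Rightarrow> 'b set) \<Rightarrow> (nat \<Rightarrow> 'g \<Rightarrow> 'b \<Rightarrow> 'b) \<Rightarrow> ((nat \<Rightarrow> 'b) \<Rightarrow> 'k::comm_ring_1) set" where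
  "equiv_model G Br actr J B act =
     zariski_closure (PiE J B) {Psi Br J B A | A. star_param G Br actr J B act A}"

text \<open>G-invariance of theta in the tensor product of the duals V_v^*, v in I, written in the
  dual basis (which G permutes in the same way as B v).\<close>
definition invariant_tensor :: "('g, 'x) monoid_scheme \<Rightarrow> nat set \<Rightarrow> (nat \<Rightarrow> 'b set)
   \<Rightarrow> (nat \<Rightarrow> 'g \<Rightarrow> 'b \<Rightarrow> 'b) \<Rightarrow> ((nat \<Rightarrow> 'b) \<Rightarrow> 'k) \<Rightarrow> bool" where
  "invariant_tensor G I B act \<theta> \<longleftrightarrow>
     (\<forall>g\<in>carrier G. \<forall>d\<in>PiE I B. \<theta> (\<lambda>v\<in>I. act v g (d v)) = \<theta> d)"

text \<open>The linear map L(T) -> L(T') induced by x_1 (x) ... (x) x_m |-> theta(x_I) * x_{J-I}.\<close>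
definition contract :: "nat set \<Rightarrow> nat set \<Rightarrow> (nat \<Rightarrow> 'b set) \<Rightarrow> ((nat \<Rightarrow> 'b) \<Rightarrow> 'k::comm_ring_1)
   \<Rightarrow> ((nat \<Rightarrow> 'b) \<Rightarrow> 'k) \<Rightarrow> (nat \<Rightarrow> 'b) \<Rightarrow> 'k" where
  "contract J I B \<theta> x = (\<lambda>c. if c \<in> PiE (J - I) B
      then (\<Sum>d\<in>PiE I B. \<theta> d * x (\<lambda>v. if v \<in> I then d v else c v)) else 0)"

end

theory Submission
  imports Defs
begin

text \<open>
  Write \<open>\<Psi>(A) = \<Sum>\<^sub>b \<Otimes>\<^sub>v a\<^sub>b\<^sub>,\<^sub>v\<close>. Contracting with \<open>\<theta>\<close> turns each summand into
  \<open>\<theta>(\<Otimes>\<^sub>v\<^sub>\<in>\<^sub>I a\<^sub>b\<^sub>,\<^sub>v) \<cdot> \<Otimes>\<^sub>v\<^sub>\<notin>\<^sub>I a\<^sub>b\<^sub>,\<^sub>v\<close>, and the scalar \<open>\<theta>(\<Otimes>\<^sub>v\<^sub>\<in>\<^sub>I a\<^sub>b\<^sub>,\<^sub>v)\<close> is a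
  \<open>G\<close>-invariant function of \<open>b\<close> because both \<open>\<theta>\<close> and the \<open>A\<^sub>r\<^sub>v\<close> are invariant. Since \<open>I\<close> is
  a proper subset of the leaves, the scalar can be absorbed into the tensor of a surviving leaf
  \<open>w\<close>, giving a \<open>G\<close>-representation of \<open>T'\<close>. So the contraction maps the parametrised set of
  \<open>T\<close> into that of \<open>T'\<close>, and being linear, hence Zariski continuous, it maps the closures
  accordingly.
\<close>

lemma polyfun_sum:
  assumes "finite S" "\<And>s. s \<in> S \<Longrightarrow> f s \<in> polyfun C"
  shows "(\<lambda>x. \<Sum>s\<in>S. f s x) \<in> polyfun C"
  using assms
proof (induction S rule: finite_induct)
  case empty
  then show ?case by (simp add: polyfun.pf_const)
next
  case (insert a S)
  then show ?case using polyfun.pf_add[of "f a" C "\<lambda>x. \<Sum>s\<in>S. f s x"] by simp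
qed

lemma polyfun_compose:
  assumes "p \<in> polyfun C'" "\<And>i. i \<in> C' \<Longrightarrow> (\<lambda>x. L x i) \<in> polyfun C"
  shows "(\<lambda>x. p (L x)) \<in> polyfun C"
  using assms
  by (induction p rule: polyfun.induct) (auto intro: polyfun.intros)

lemma zariski_closure_image:
  assumes coords: "\<And>i. i \<in> C' \<Longrightarrow> (\<lambda>x. L x i) \<in> polyfun C"
    and in_vecs: "\<And>x. L x \<in> vecs C'"
    and gens: "L ` S \<subseteq> S'"
  shows "L ` zariski_closure C S \<subseteq> zariski_closure C' S'"
proof
  fix y assume "y \<in> L ` zariski_closure C S"
  then obtain x where x: "x \<in> zariski_closure C S" and y: "y = L x" by blast
  have "p y = 0" if p: "p \<in> polyfun C'" and vanish: "\<forall>s'\<in>S'. p s' = 0" for p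
  proof -
    have "(\<lambda>x. p (L x)) \<in> polyfun C" using polyfun_compose[OF p coords] .
    moreover have "\<forall>s\<in>S. p (L s) = 0" using gens vanish by blast
    ultimately show ?thesis
      using x y unfolding zariski_closure_def by (auto dest: bspec[where x = "\<lambda>x. p (L x)"])
  qed
  then show "y \<in> zariski_closure C' S'"
    using in_vecs[of x] y unfolding zariski_closure_def by simp
qed

lemma bij_betw_PiE_pointwise:
  assumes "\<And>v. v \<in> I \<Longrightarrow> bij_betw (f v) (B v) (B v)"
  shows "bij_betw (\<lambda>e. \<lambda>v\<in>I. f v (e v)) (PiE I B) (PiE I B)"
proof (rule bij_betwI[where g = "\<lambda>e. \<lambda>v\<in>I. inv_into (B v) (f v) (e v)"])
  have maps: "f v x \<in> B v" "inv_into (B v) (f v) x \<in> B v" if "v \<in> I" "x \<in> B v" for v x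
  proof -
    have "f v ` B v = B v" using assms[OF that(1)] by (simp add: bij_betw_def)
    then show "f v x \<in> B v" "inv_into (B v) (f v) x \<in> B v"
      using that(2) by (blast, metis inv_into_into)
  qed
  then show "(\<lambda>e. \<lambda>v\<in>I. f v (e v)) \<in> PiE I B \<rightarrow> PiE I B"
    and "(\<lambda>e. \<lambda>v\<in>I. inv_into (B v) (f v) (e v)) \<in> PiE I B \<rightarrow> PiE I B"
    by (auto simp: PiE_iff)
  fix e assume e: "e \<in> PiE I B"
  have "inv_into (B v) (f v) (f v (e v)) = e v \<and> f v (inv_into (B v) (f v) (e v)) = e v"
    if "v \<in> I" for v
  proof -
    have "e v \<in> B v" using e that by (rule PiE_mem)
    then show ?thesis
      using assms[OF that] by (simp add: bij_betw_def inv_into_f_f f_inv_into_f)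
  qed
  moreover have "e v = undefined" if "v \<notin> I" for v
    using e that by (rule PiE_arb)
  ultimately show "(\<lambda>v\<in>I. inv_into (B v) (f v) ((\<lambda>v\<in>I. f v (e v)) v)) = e"
    and "(\<lambda>v\<in>I. f v ((\<lambda>v\<in>I. inv_into (B v) (f v) (e v)) v)) = e"
    by (simp_all add: fun_eq_iff)
qed

lemma merge_in_PiE:
  assumes "I \<subseteq> J" "c \<in> PiE (J - I) B" "d \<in> PiE I B"
  shows "(\<lambda>v. if v \<in> I then d v else c v) \<in> PiE J B"
  using assms unfolding PiE_def Pi_def extensional_def by auto

lemma contract_in_vecs: "contract J I B \<theta> x \<in> vecs (PiE (J - I) B)"
  unfolding vecs_def contract_def by simp

lemma polyfun_contract_coord:
  assumes "I \<subseteq> J" "finite (PiE I B)" "c \<in> PiE (J - I) B"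
  shows "(\<lambda>x. contract J I B \<theta> x c) \<in> polyfun (PiE J B)"
proof -
  have "(\<lambda>x. \<Sum>d\<in>PiE I B. \<theta> d * x (\<lambda>v. if v \<in> I then d v else c v)) \<in> polyfun (PiE J B)"
    using assms merge_in_PiE[OF assms(1,3)]
    by (intro polyfun_sum) (auto intro!: polyfun.pf_mult polyfun.pf_const polyfun.pf_coord)
  then show ?thesis using assms(3) unfolding contract_def by simp
qed

definition pairing :: "nat set \<Rightarrow> (nat \<Rightarrow> 'b set) \<Rightarrow> ((nat \<Rightarrow> 'b) \<Rightarrow> 'k::comm_ring_1)
    \<Rightarrow> (nat \<Rightarrow> 'c \<Rightarrow> 'b \<Rightarrow> 'k) \<Rightarrow> 'c \<Rightarrow> 'k" where
  "pairing I B \<theta> A b = (\<Sum>d\<in>PiE I B. \<theta> d * (\<Prod>v\<in>I. A v b (d v)))"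

lemma contract_Psi:
  assumes "I \<subseteq> J" "finite J" "c \<in> PiE (J - I) B"
  shows "contract J I B \<theta> (Psi Br J B A) c
           = (\<Sum>b\<in>Br. pairing I B \<theta> A b * (\<Prod>v\<in>J - I. A v b (c v)))"
proof -
  have split: "(\<Prod>v\<in>J. A v b (if v \<in> I then d v else c v))
      = (\<Prod>v\<in>I. A v b (d v)) * (\<Prod>v\<in>J - I. A v b (c v))" for b d
  proof -
    have "(\<Prod>v\<in>J. A v b (if v \<in> I then d v else c v))
        = (\<Prod>v\<in>J - I. A v b (if v \<in> I then d v else c v))
          * (\<Prod>v\<in>I. A v b (if v \<in> I then d v else c v))"
      by (rule prod.subset_diff[OF assms(1,2)])
    also have "\<dots> = (\<Prod>v\<in>J - I. A v b (c v)) * (\<Prod>v\<in>I. A v b (d v))"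
      by (intro arg_cong2[where f = "(*)"] prod.cong) auto
    finally show ?thesis by (simp add: mult.commute)
  qed
  have "contract J I B \<theta> (Psi Br J B A) c
      = (\<Sum>d\<in>PiE I B. \<theta> d * (\<Sum>b\<in>Br. (\<Prod>v\<in>I. A v b (d v)) * (\<Prod>v\<in>J - I. A v b (c v))))"
    using assms(3) merge_in_PiE[OF assms(1,3)] by (simp add: contract_def Psi_def split)
  also have "\<dots> = (\<Sum>b\<in>Br. \<Sum>d\<in>PiE I B. \<theta> d * (\<Prod>v\<in>I. A v b (d v)) * (\<Prod>v\<in>J - I. A v b (c v)))"
    by (subst sum.swap) (simp add: sum_distrib_left mult.assoc)
  also have "\<dots> = (\<Sum>b\<in>Br. pairing I B \<theta> A b * (\<Prod>v\<in>J - I. A v b (c v)))"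
    unfolding pairing_def by (simp add: sum_distrib_right)
  finally show ?thesis .
qed

lemma pairing_invariant:
  assumes A: "star_param G Br actr J B act A" and "I \<subseteq> J"
    and actions: "\<And>v. v \<in> I \<Longrightarrow> group_action G (B v) (act v)"
    and \<theta>: "invariant_tensor G I B act \<theta>"
    and g: "g \<in> carrier G" and b: "b \<in> Br"
  shows "pairing I B \<theta> A (actr g b) = pairing I B \<theta> A b"
proof -
  let ?g = "\<lambda>e. \<lambda>v\<in>I. act v g (e v)"
  have "bij_betw (act v g) (B v) (B v)" if "v \<in> I" for v
    using group_action.bij_prop0[OF actions[OF that] g] by (simp add: Bij_def)
  then have bij: "bij_betw ?g (PiE I B) (PiE I B)"
    by (rule bij_betw_PiE_pointwise)
  have "pairing I B \<theta> A (actr g b) = (\<Sum>e\<in>PiE I B. \<theta> (?g e) * (\<Prod>v\<in>I. A v (actr g b) (?g e v)))"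
    unfolding pairing_def by (rule sum.reindex_bij_betw[OF bij, symmetric])
  also have "\<dots> = pairing I B \<theta> A b"
    unfolding pairing_def
  proof (rule sum.cong[OF refl])
    fix e assume e: "e \<in> PiE I B"
    have "\<theta> (?g e) = \<theta> e" using \<theta> g e unfolding invariant_tensor_def by blast
    moreover have "(\<Prod>v\<in>I. A v (actr g b) (?g e v)) = (\<Prod>v\<in>I. A v b (e v))"
    proof (rule prod.cong[OF refl])
      fix v assume "v \<in> I"
      then show "A v (actr g b) (?g e v) = A v b (e v)"
        using A assms(2) g b e unfolding star_param_def by (simp, meson PiE_mem subsetD)
    qed
    ultimately show "\<theta> (?g e) * (\<Prod>v\<in>I. A v (actr g b) (?g e v)) = \<theta> e * (\<Prod>v\<in>I. A v b (e v))"
      by simp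
  qed
  finally show ?thesis .
qed

lemma star_param_scale_leaf:
  assumes "star_param G Br actr J B act A"
    and "\<And>g b. g \<in> carrier G \<Longrightarrow> b \<in> Br \<Longrightarrow> s (actr g b) = s b"
  shows "star_param G Br actr J B act (A(w := \<lambda>b c. s b * A w b c))"
  using assms unfolding star_param_def by auto

lemma prod_scale_leaf:
  assumes "finite J" "w \<in> J"
  shows "(\<Prod>v\<in>J. (A(w := \<lambda>b c. s b * A w b c)) v b (c v)) = s b * (\<Prod>v\<in>J. A v b (c v))"
  using prod.remove[OF assms, of "\<lambda>v. (A(w := \<lambda>b c. s b * A w b c)) v b (c v)"]
    prod.remove[OF assms, of "\<lambda>v. A v b (c v)"]
  by (simp add: mult.assoc)

lemma contract_Psi_is_Psi:
  assumes A: "star_param G Br actr J B act A"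
    and "I \<subset> J" "finite J"
    and "\<And>v. v \<in> I \<Longrightarrow> group_action G (B v) (act v)"
    and "invariant_tensor G I B act \<theta>"
  shows "\<exists>A'. star_param G Br actr (J - I) B act A'
           \<and> contract J I B \<theta> (Psi Br J B A) = Psi Br (J - I) B A'"
proof -
  obtain w where w: "w \<in> J - I" using assms(2) by blast
  let ?A' = "A(w := \<lambda>b c. pairing I B \<theta> A b * A w b c)"
  have "star_param G Br actr J B act ?A'"
    using assms pairing_invariant[OF A] by (intro star_param_scale_leaf) auto
  then have "star_param G Br actr (J - I) B act ?A'"
    unfolding star_param_def by blast
  moreover have "contract J I B \<theta> (Psi Br J B A) c = Psi Br (J - I) B ?A' c" for c
  proof (cases "c \<in> PiE (J - I) B")
    case True
    have "finite (J - I)" using assms(3) by simp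
    have "contract J I B \<theta> (Psi Br J B A) c
        = (\<Sum>b\<in>Br. pairing I B \<theta> A b * (\<Prod>v\<in>J - I. A v b (c v)))"
      using assms(2,3) True by (intro contract_Psi) auto
    also have "\<dots> = (\<Sum>b\<in>Br. \<Prod>v\<in>J - I. ?A' v b (c v))"
      by (simp only: prod_scale_leaf[OF \<open>finite (J - I)\<close> w])
    also have "\<dots> = Psi Br (J - I) B ?A' c"
      using True by (simp add: Psi_def del: fun_upd_apply)
    finally show ?thesis .
  qed (simp add: contract_def Psi_def)
  ultimately show ?thesis by blast
qed

theorem lemma6p4:
  fixes G :: "('g, 'x) monoid_scheme"
    and m :: nat and I :: "nat set"
    and Br :: "'c set" and actr :: "'g \<Rightarrow> 'c \<Rightarrow> 'c"
    and B :: "nat \<Rightarrow> 'b set" and act :: "nat \<Rightarrow> 'g \<Rightarrow> 'b \<Rightarrow> 'b"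
    and \<theta> :: "(nat \<Rightarrow> 'b) \<Rightarrow> 'k::field"
  assumes "comm_group G" and "finite (carrier G)"
    and "infinite (UNIV :: 'k set)"
    and "reps_split G TYPE('k)"
    and "finite Br" and "group_action G Br actr"
    and "\<And>v. v < m \<Longrightarrow> finite (B v)"
    and "\<And>v. v < m \<Longrightarrow> group_action G (B v) (act v)"
    and "I \<subset> {..<m}"
    and "invariant_tensor G I B act \<theta>"
  shows "contract {..<m} I B \<theta> ` equiv_model G Br actr {..<m} B act
           \<subseteq> equiv_model G Br actr ({..<m} - I) B act"
  unfolding equiv_model_def
proof (rule zariski_closure_image)
  have "finite (PiE I B)"
    using assms(7,9) by (intro finite_PiE) (auto intro: finite_subset)
  then show "(\<lambda>x. contract {..<m} I B \<theta> x c) \<in> polyfun (PiE {..<m} B)"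
    if "c \<in> PiE ({..<m} - I) B" for c
    using assms(9) that by (intro polyfun_contract_coord) auto
  show "contract {..<m} I B \<theta> x \<in> vecs (PiE ({..<m} - I) B)" for x
    by (rule contract_in_vecs)
  show "contract {..<m} I B \<theta> ` {Psi Br {..<m} B A |A. star_param G Br actr {..<m} B act A}
      \<subseteq> {Psi Br ({..<m} - I) B A' |A'. star_param G Br actr ({..<m} - I) B act A'}"
  proof (rule image_subsetI, clarify)
    fix A :: "nat \<Rightarrow> 'c \<Rightarrow> 'b \<Rightarrow> 'k"
    assume A: "star_param G Br actr {..<m} B act A"
    have "\<And>v. v \<in> I \<Longrightarrow> group_action G (B v) (act v)" using assms(8,9) by blast
    from contract_Psi_is_Psi[OF A assms(9) finite_lessThan this assms(10)]
    show "\<exists>A'. contract {..<m} I B \<theta> (Psi Br {..<m} B A) = Psi Br ({..<m} - I) B A'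
        \<and> star_param G Br actr ({..<m} - I) B act A'"
      by blast
  qed
qed

end
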